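(* Let $A$ be a finite-dimensional semisimple Hopf algebra over $k$, let $\tau$ be a Hopf automorphism of $A$ of finite order $n$, let $G=\langle\tau\rangle$ and $K=A\natural k^G$. Given an $A$-module $N$, make it a $K$-module $M$ by letting $a\natural p_x$ act as $a$ if $x=\tau^{-1}$ and as $0$ otherwise (so $M_{\tau^{-1}}=N$ and $M_x=0$ for $x\neq\tau^{-1}$). Then for every positive multiple $m$ of $n$, $$\nu^A_{m,\tau}(N)=\nu^K_m(M).$$
   Context: $k$ is algebraically closed of characteristic $0$. $k^G$ has basis $\{p_x\}_{x\in G}$ with $p_xp_y=\delta_{x,y}p_x$. The smash coproduct $K=A\natural k^G$ is $A\otimes k^G$ (elements written $a\natural p_x$) with tensor product algebra structure, comultiplication $\Delta(a\natural p_x)=\sum_{y\in G}(a_1\natural p_y)\otimes((y^{-1}\cdot a_2)\natural p_{y^{-1}x})$, counit $\varepsilon(a\natural p_x)=\delta_{1,x}\varepsilon(a)$, antipode $S(a\natural p_x)=(x^{-1}\cdot S(a))\natural p_{x^{-1}}$. $\Lambda_A$ is the normalized integral of $A$ and $\Lambda_K=\Lambda_A\natural p_1$. For a $K$-module $M$, $M_x=p_x\cdot M$. Hopf powers: $h^{[m]}=\sum h_1\cdots h_m$ and $h^{[m,\sigma]}=\sum h_1(\sigma\cdot h_2)\cdots(\sigma^{m-1}\cdot h_m)$ for a Hopf automorphism $\sigma$. Indicators: $\nu^K_m(V)=\chi_V(\Lambda_K^{[m]})$ for a $K$-module $V$ with character $\chi_V$; $\nu^A_{m,\sigma}(W)=\chi_W(\Lambda_A^{[m,\sigma]})$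 for an $A$-module $W$ and Hopf automorphism $\sigma$ whose order divides $m$. *)

theory Defs
  imports "Jordan_Normal_Form.Matrix" "HOL-Computational_Algebra.Polynomial"
begin

(* A finite-dimensional Hopf algebra over a field 'k, given by structure constants
   with respect to a finite basis indexed by the set "basis H".
   Elements are coefficient functions 'b => 'k (zero outside the basis).
     e_i e_j     = sum_l mu i j l e_l
     1           = sum_l eta l e_l
     Delta(e_i)  = sum_{j,l} delta i j l e_j (x) e_l
     eps(e_i)    = eps i
     S(e_i)      = sum_j ant i j e_j                                         *)
record ('b, 'k) hopf_sc =
  basis :: "'b set"
  mu    :: "'b \<Rightarrow> 'b \<Rightarrow> 'b \<Rightarrow> 'k"
  eta   :: "'b \<Rightarrow> 'k"
  delta :: "'b \<Rightarrow> 'b \<Rightarrow> 'b \<Rightarrow> 'k"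
  eps   :: "'b \<Rightarrow> 'k"
  ant   :: "'b \<Rightarrow> 'b \<Rightarrow> 'k"

definition is_hopf_algebra :: "('b, 'k::field) hopf_sc \<Rightarrow> bool" where
  "is_hopf_algebra H \<longleftrightarrow> (let B = basis H in
     finite B \<and>
     (\<forall>i\<in>B. \<forall>j\<in>B. \<forall>k\<in>B. \<forall>r\<in>B.
        (\<Sum>l\<in>B. mu H i j l * mu H l k r) = (\<Sum>l\<in>B. mu H j k l * mu H i l r)) \<and>
     (\<forall>j\<in>B. \<forall>l\<in>B. (\<Sum>i\<in>B. eta H i * mu H i j l) = (if j = l then 1 else 0)
                     \<and> (\<Sum>i\<in>B. eta H i * mu H j i l) = (if j = l then 1 else 0)) \<and>
     (\<forall>i\<in>B. \<forall>a\<in>B. \<forall>b\<in>B. \<forall>c\<in>B.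
        (\<Sum>j\<in>B. delta H i j c * delta H j a b) = (\<Sum>l\<in>B. delta H i a l * delta H l b c)) \<and>
     (\<forall>i\<in>B. \<forall>l\<in>B. (\<Sum>j\<in>B. eps H j * delta H i j l) = (if i = l then 1 else 0)
                     \<and> (\<Sum>j\<in>B. eps H j * delta H i l j) = (if i = l then 1 else 0)) \<and>
     (\<forall>i\<in>B. \<forall>j\<in>B. \<forall>a\<in>B. \<forall>b\<in>B.
        (\<Sum>l\<in>B. mu H i j l * delta H l a b) =
        (\<Sum>p\<in>B. \<Sum>q\<in>B. \<Sum>r\<in>B. \<Sum>s\<in>B.
            delta H i p q * delta H j r s * mu H p r a * mu H q s b)) \<and>
     (\<forall>a\<in>B. \<forall>b\<in>B. (\<Sum>i\<in>B. eta H i * delta H i a b) = eta H a * eta H b) \<and>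
     (\<forall>i\<in>B. \<forall>j\<in>B. (\<Sum>l\<in>B. mu H i j l * eps H l) = eps H i * eps H j) \<and>
     (\<Sum>i\<in>B. eta H i * eps H i) = 1 \<and>
     (\<forall>i\<in>B. \<forall>r\<in>B.
        (\<Sum>j\<in>B. \<Sum>l\<in>B. \<Sum>p\<in>B. delta H i j l * ant H j p * mu H p l r) = eps H i * eta H r
      \<and> (\<Sum>j\<in>B. \<Sum>l\<in>B. \<Sum>p\<in>B. delta H i j l * ant H l p * mu H j p r) = eps H i * eta H r))"

definition hvec :: "('b, 'k::zero) hopf_sc \<Rightarrow> ('b \<Rightarrow> 'k) \<Rightarrow> bool" where
  "hvec H v \<longleftrightarrow> (\<forall>b. b \<notin> basis H \<longrightarrow> v b = 0)"

definition bvec :: "('b, 'k::{zero,one}) hopf_sc \<Rightarrow> 'b \<Rightarrow> ('b \<Rightarrow> 'k)" where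
  "bvec H i = (\<lambda>b. if b = i \<and> b \<in> basis H then 1 else 0)"

definition hmult :: "('b, 'k::comm_ring_1) hopf_sc \<Rightarrow> ('b \<Rightarrow> 'k) \<Rightarrow> ('b \<Rightarrow> 'k) \<Rightarrow> ('b \<Rightarrow> 'k)" where
  "hmult H x y = (\<lambda>l. if l \<in> basis H then
      (\<Sum>i\<in>basis H. \<Sum>j\<in>basis H. x i * y j * mu H i j l) else 0)"

definition hone :: "('b, 'k::comm_ring_1) hopf_sc \<Rightarrow> ('b \<Rightarrow> 'k)" where
  "hone H = (\<lambda>l. if l \<in> basis H then eta H l else 0)"

definition hcounit :: "('b, 'k::comm_ring_1) hopf_sc \<Rightarrow> ('b \<Rightarrow> 'k) \<Rightarrow> 'k" where
  "hcounit H x = (\<Sum>i\<in>basis H. x i * eps H i)"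

(* linear map given by a matrix: sig i r = coefficient of e_r in sigma(e_i) *)
definition hlin :: "('b, 'k::comm_ring_1) hopf_sc \<Rightarrow> ('b \<Rightarrow> 'b \<Rightarrow> 'k) \<Rightarrow> ('b \<Rightarrow> 'k) \<Rightarrow> ('b \<Rightarrow> 'k)" where
  "hlin H sig v = (\<lambda>r. if r \<in> basis H then (\<Sum>i\<in>basis H. v i * sig i r) else 0)"

definition left_ideal :: "('b, 'k::field) hopf_sc \<Rightarrow> ('b \<Rightarrow> 'k) set \<Rightarrow> bool" where
  "left_ideal H I \<longleftrightarrow> I \<subseteq> {v. hvec H v} \<and> (\<lambda>_. 0) \<in> I \<and>
     (\<forall>x\<in>I. \<forall>y\<in>I. (\<lambda>b. x b + y b) \<in> I) \<and>
     (\<forall>c. \<forall>x\<in>I. (\<lambda>b. c * x b) \<in> I) \<and>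
     (\<forall>a. \<forall>x\<in>I. hvec H a \<longrightarrow> hmult H a x \<in> I)"

definition semisimple :: "('b, 'k::field) hopf_sc \<Rightarrow> bool" where
  "semisimple H \<longleftrightarrow> (\<forall>I. left_ideal H I \<longrightarrow>
     (\<exists>J. left_ideal H J \<and> I \<inter> J = {\<lambda>_. 0} \<and>
        (\<forall>v. hvec H v \<longrightarrow> (\<exists>x\<in>I. \<exists>y\<in>J. v = (\<lambda>b. x b + y b)))))"

definition normalized_integral :: "('b, 'k::field) hopf_sc \<Rightarrow> ('b \<Rightarrow> 'k)" where
  "normalized_integral H = (THE L. hvec H L \<and>
      (\<forall>a. hvec H a \<longrightarrow> hmult H a L = (\<lambda>b. hcounit H a * L b)) \<and> hcounit H L = 1)"

(* Hopf (= bialgebra) automorphism given by a matrix *)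
definition hopf_automorphism :: "('b, 'k::field) hopf_sc \<Rightarrow> ('b \<Rightarrow> 'b \<Rightarrow> 'k) \<Rightarrow> bool" where
  "hopf_automorphism H sig \<longleftrightarrow> (let B = basis H in
     bij_betw (hlin H sig) {v. hvec H v} {v. hvec H v} \<and>
     (\<forall>i\<in>B. \<forall>j\<in>B. \<forall>r\<in>B.
        (\<Sum>l\<in>B. mu H i j l * sig l r) = (\<Sum>p\<in>B. \<Sum>q\<in>B. sig i p * sig j q * mu H p q r)) \<and>
     (\<forall>r\<in>B. (\<Sum>i\<in>B. eta H i * sig i r) = eta H r) \<and>
     (\<forall>i\<in>B. \<forall>a\<in>B. \<forall>b\<in>B.
        (\<Sum>l\<in>B. sig i l * delta H l a b) = (\<Sum>p\<in>B. \<Sum>q\<in>B. delta H i p q * sig p a * sig q b)) \<and>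
     (\<forall>i\<in>B. (\<Sum>l\<in>B. sig i l * eps H l) = eps H i))"

definition has_order :: "('b, 'k::field) hopf_sc \<Rightarrow> ('b \<Rightarrow> 'b \<Rightarrow> 'k) \<Rightarrow> nat \<Rightarrow> bool" where
  "has_order H sig n \<longleftrightarrow> 0 < n \<and> (\<forall>v. hvec H v \<longrightarrow> (hlin H sig ^^ n) v = v) \<and>
     (\<forall>k. 0 < k \<and> k < n \<longrightarrow> (\<exists>v. hvec H v \<and> (hlin H sig ^^ k) v \<noteq> v))"

(* coefficient of e_{i1} (x) ... (x) e_{im} in the iterated coproduct of h *)
fun icoef :: "('b, 'k::comm_ring_1) hopf_sc \<Rightarrow> ('b \<Rightarrow> 'k) \<Rightarrow> 'b list \<Rightarrow> 'k" where
  "icoef H h [] = 0"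
| "icoef H h [i] = h i"
| "icoef H h (i # j # xs) = (\<Sum>l\<in>basis H. delta H l i j * icoef H h (l # xs))"

fun twisted_prod :: "('b, 'k::comm_ring_1) hopf_sc \<Rightarrow> (('b \<Rightarrow> 'k) \<Rightarrow> ('b \<Rightarrow> 'k)) \<Rightarrow> nat \<Rightarrow> 'b list \<Rightarrow> ('b \<Rightarrow> 'k)" where
  "twisted_prod H s k [] = hone H"
| "twisted_prod H s k (i # xs) = hmult H ((s ^^ k) (bvec H i)) (twisted_prod H s (Suc k) xs)"

(* h^[m,sigma] = sum h_1 sigma(h_2) ... sigma^{m-1}(h_m) *)
definition hopf_power :: "('b, 'k::comm_ring_1) hopf_sc \<Rightarrow> (('b \<Rightarrow> 'k) \<Rightarrow> ('b \<Rightarrow> 'k)) \<Rightarrow> nat \<Rightarrow> ('b \<Rightarrow> 'k) \<Rightarrow> ('b \<Rightarrow> 'k)" where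
  "hopf_power H s m h = (\<lambda>b. \<Sum>xs\<in>{xs. set xs \<subseteq> basis H \<and> length xs = m}.
      icoef H h xs * twisted_prod H s 0 xs b)"

(* modules: representation rho : basis -> r x r matrices, extended linearly *)
definition hact :: "('b, 'k::comm_ring_1) hopf_sc \<Rightarrow> nat \<Rightarrow> ('b \<Rightarrow> 'k mat) \<Rightarrow> ('b \<Rightarrow> 'k) \<Rightarrow> 'k mat" where
  "hact H r rho a = mat r r (\<lambda>(p, q). \<Sum>i\<in>basis H. a i * rho i $$ (p, q))"

definition is_module :: "('b, 'k::field) hopf_sc \<Rightarrow> nat \<Rightarrow> ('b \<Rightarrow> 'k mat) \<Rightarrow> bool" where
  "is_module H r rho \<longleftrightarrow> (\<forall>i\<in>basis H. rho i \<in> carrier_mat r r) \<and>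
     (\<forall>a b. hvec H a \<and> hvec H b \<longrightarrow> hact H r rho (hmult H a b) = hact H r rho a * hact H r rho b) \<and>
     hact H r rho (hone H) = 1\<^sub>m r"

definition character :: "('b, 'k::comm_ring_1) hopf_sc \<Rightarrow> nat \<Rightarrow> ('b \<Rightarrow> 'k mat) \<Rightarrow> ('b \<Rightarrow> 'k) \<Rightarrow> 'k" where
  "character H r rho a = (\<Sum>p<r. hact H r rho a $$ (p, p))"

definition twisted_indicator :: "('b, 'k::field) hopf_sc \<Rightarrow> ('b \<Rightarrow> 'b \<Rightarrow> 'k) \<Rightarrow> nat \<Rightarrow> nat \<Rightarrow> ('b \<Rightarrow> 'k mat) \<Rightarrow> 'k" where
  "twisted_indicator H sig m r rho =
     character H r rho (hopf_power H (hlin H sig) m (normalized_integral H))"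

definition indicator :: "('b, 'k::field) hopf_sc \<Rightarrow> nat \<Rightarrow> nat \<Rightarrow> ('b \<Rightarrow> 'k mat) \<Rightarrow> 'k" where
  "indicator H m r rho = character H r rho (hopf_power H id m (normalized_integral H))"

(* Smash coproduct K = A # k^G, G = <tau> of order n; the group element tau^x
   (0 <= x < n) is encoded by x, basis element e_i # p_{tau^x} by (i, x).
   The action of g = tau^y on A is hlin A tau ^^ y. *)
definition smash_coproduct :: "('b, 'k::field) hopf_sc \<Rightarrow> ('b \<Rightarrow> 'b \<Rightarrow> 'k) \<Rightarrow> nat \<Rightarrow> ('b \<times> nat, 'k) hopf_sc" where
  "smash_coproduct A tau n = \<lparr>
     basis = basis A \<times> {0..<n},
     mu = (\<lambda>(i, x) (j, y) (l, z). if x = y \<and> y = z then mu A i j l else 0),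
     eta = (\<lambda>(l, z). eta A l),
     delta = (\<lambda>(i, x) (j, y) (l', z).
        if z = (x + n - y) mod n then
          (\<Sum>l\<in>basis A. delta A i j l * (hlin A tau ^^ ((n - y) mod n)) (bvec A l) l')
        else 0),
     eps = (\<lambda>(i, x). if x = 0 then eps A i else 0),
     ant = (\<lambda>(i, x) (j, z).
        if z = (n - x) mod n then
          (hlin A tau ^^ ((n - x) mod n)) (\<lambda>b. if b \<in> basis A then ant A i b else 0) j
        else 0) \<rparr>"

(* the K-module M built from the A-module N: a # p_x acts as a if x = tau^{-1}, else 0 *)
definition induced_rep :: "nat \<Rightarrow> nat \<Rightarrow> ('b \<Rightarrow> 'k::zero mat) \<Rightarrow> ('b \<times> nat \<Rightarrow> 'k mat)" where
  "induced_rep n r rho = (\<lambda>(i, x). if x = (n - 1) mod n then rho i else 0\<^sub>m r r)"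

end

theory Submission
  imports Defs
begin

text \<open>The normalized integral of \<open>K = A \<natural> k^G\<close> is \<open>\<Lambda>\<^sub>A \<natural> p\<^sub>1\<close>, and \<open>M\<close> is \<open>N\<close> placed in the
  slice \<open>A \<natural> p\<^bsub>\<tau>^-1\<^esub>\<close>, so \<open>\<nu>^K\<^sub>m(M)\<close> is the character of \<open>N\<close> at the \<open>p\<^bsub>\<tau>^-1\<^esub>\<close>-slice of
  \<open>(\<Lambda>\<^sub>A \<natural> p\<^sub>1)^[m]\<close>. Multiplication in \<open>K\<close> is slice-wise, so only those terms of the iterated
  coproduct contribute whose \<open>m\<close> factors all lie in that slice. Their group labels multiply to
  \<open>\<tau>^-m = 1\<close>, the label of \<open>\<Lambda>\<^sub>A \<natural> p\<^sub>1\<close>, and the coproduct of \<open>K\<close> twists the \<open>t\<close>-th factor by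
  \<open>\<tau>^(t-1)\<close>; what remains is exactly \<open>\<Lambda>\<^sub>A^[m,\<tau>]\<close>.\<close>

section \<open>Words over a finite set\<close>

abbreviation words :: "'a set \<Rightarrow> nat \<Rightarrow> 'a list set" where
  "words B m \<equiv> {xs. set xs \<subseteq> B \<and> length xs = m}"

lemma words_0: "{xs. xs = [] \<and> set xs \<subseteq> B} = {[]}"
  by auto

lemma sum_words_Suc:
  assumes "finite B"
  shows "(\<Sum>xs\<in>words B (Suc m). f xs) = (\<Sum>i\<in>B. \<Sum>xs\<in>words B m. f (i # xs))"
proof -
  have inj: "inj_on (\<lambda>(xs, i). i # xs) (words B m \<times> B)"
    by (auto simp: inj_on_def)
  have "(\<Sum>xs\<in>words B (Suc m). f xs) = (\<Sum>p\<in>words B m \<times> B. f (snd p # fst p))"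
    unfolding lists_length_Suc_eq by (subst sum.reindex[OF inj]) (auto intro!: sum.cong)
  also have "\<dots> = (\<Sum>xs\<in>words B m. \<Sum>i\<in>B. f (i # xs))"
    by (simp add: sum.cartesian_product case_prod_unfold)
  also have "\<dots> = (\<Sum>i\<in>B. \<Sum>xs\<in>words B m. f (i # xs))"
    by (rule sum.swap)
  finally show ?thesis .
qed

lemma sum_words_constant_snd:
  assumes "finite B" "finite C" "c \<in> C"
  shows "(\<Sum>ws\<in>words (B \<times> C) m. if \<forall>w\<in>set ws. snd w = c then g ws else 0)
       = (\<Sum>js\<in>words B m. g (map (\<lambda>j. (j, c)) js))"
proof (induction m arbitrary: g)
  case 0
  then show ?case by (simp add: words_0)
next
  case (Suc m)
  have fin: "finite (B \<times> C)"
    using assms by simp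
  have "(\<Sum>ws\<in>words (B \<times> C) (Suc m). if \<forall>w\<in>set ws. snd w = c then g ws else 0)
      = (\<Sum>i\<in>B. \<Sum>x\<in>C. if x = c then (\<Sum>ws\<in>words (B \<times> C) m.
           if \<forall>w\<in>set ws. snd w = c then g ((i, c) # ws) else 0) else 0)"
    unfolding sum_words_Suc[OF fin] sum.cartesian_product'
    by (intro sum.cong refl) (auto intro!: sum.cong)
  also have "\<dots> = (\<Sum>i\<in>B. \<Sum>js\<in>words B m. g ((i, c) # map (\<lambda>j. (j, c)) js))"
    using assms Suc.IH by simp
  also have "\<dots> = (\<Sum>js\<in>words B (Suc m). g (map (\<lambda>j. (j, c)) js))"
    by (simp add: sum_words_Suc[OF assms(1)])
  finally show ?case .
qed

section \<open>Algebras given by structure constants\<close>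

lemma hvec_hlin: "hvec H (hlin H s v)"
  by (simp add: hvec_def hlin_def)

lemma hvec_bvec: "hvec H (bvec H i)"
  by (simp add: hvec_def bvec_def)

lemma hvec_hmult: "hvec H (hmult H a b)"
  by (simp add: hvec_def hmult_def)

lemma hvec_hone: "hvec H (hone H)"
  by (simp add: hvec_def hone_def)

lemma hvec_hlin_funpow: "hvec H v \<Longrightarrow> hvec H ((hlin H s ^^ k) v)"
  by (induction k) (simp_all add: hvec_hlin)

lemma hmult_bvec_left:
  assumes "finite (basis H)" "i \<in> basis H"
  shows "hmult H (bvec H i) w l = (if l \<in> basis H then (\<Sum>j\<in>basis H. w j * mu H i j l) else 0)"
proof -
  have "(\<Sum>i'\<in>basis H. \<Sum>j\<in>basis H. bvec H i i' * w j * mu H i' j l)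
      = (\<Sum>i'\<in>basis H. if i' = i then (\<Sum>j\<in>basis H. w j * mu H i' j l) else 0)"
    by (rule sum.cong) (auto simp: bvec_def)
  then show ?thesis
    using assms by (simp add: hmult_def)
qed

lemma hmult_expand_left:
  assumes "finite (basis H)" "hvec H v"
  shows "hmult H v w l = (\<Sum>j\<in>basis H. v j * hmult H (bvec H j) w l)"
proof (cases "l \<in> basis H")
  case True
  have "(\<Sum>j\<in>basis H. v j * hmult H (bvec H j) w l)
      = (\<Sum>j\<in>basis H. v j * (\<Sum>j'\<in>basis H. w j' * mu H j j' l))"
    using assms True by (intro sum.cong refl) (simp add: hmult_bvec_left)
  then show ?thesis
    using True by (simp add: hmult_def sum_distrib_left mult_ac)
qed (simp add: hmult_def)

lemma hmult_sum_right:
  "hmult H u (\<lambda>b. \<Sum>x\<in>S. c x * f x b) l = (\<Sum>x\<in>S. c x * hmult H u (f x) l)"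
proof (cases "l \<in> basis H")
  case True
  have "(\<Sum>i\<in>basis H. \<Sum>j\<in>basis H. u i * (\<Sum>x\<in>S. c x * f x j) * mu H i j l)
      = (\<Sum>i\<in>basis H. \<Sum>j\<in>basis H. \<Sum>x\<in>S. c x * (u i * f x j * mu H i j l))"
    by (simp add: sum_distrib_left sum_distrib_right mult_ac)
  also have "\<dots> = (\<Sum>x\<in>S. \<Sum>i\<in>basis H. \<Sum>j\<in>basis H. c x * (u i * f x j * mu H i j l))"
    by (subst sum.swap) (rule sum.cong[OF refl], rule sum.swap)
  also have "\<dots> = (\<Sum>x\<in>S. c x * (\<Sum>i\<in>basis H. \<Sum>j\<in>basis H. u i * f x j * mu H i j l))"
    by (simp add: sum_distrib_left)
  finally show ?thesis
    using True by (simp add: hmult_def)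
qed (simp add: hmult_def)

lemma hmult_add_right: "hmult H a (\<lambda>b. x b + y b) = (\<lambda>b. hmult H a x b + hmult H a y b)"
  by (auto simp: hmult_def fun_eq_iff distrib_left distrib_right sum.distrib)

lemma hmult_smult_right: "hmult H a (\<lambda>b. c * x b) = (\<lambda>b. c * hmult H a x b)"
  by (auto simp: hmult_def fun_eq_iff sum_distrib_left mult_ac)

lemma hmult_zero_right: "hmult H a (\<lambda>_. 0) = (\<lambda>_. 0)"
  by (simp add: hmult_def fun_eq_iff)

lemma hcounit_add: "hcounit H (\<lambda>b. x b + y b) = hcounit H x + hcounit H y"
  by (simp add: hcounit_def distrib_right sum.distrib)

lemma hcounit_smult: "hcounit H (\<lambda>b. c * x b) = c * hcounit H x"
  by (simp add: hcounit_def sum_distrib_left mult_ac)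

fun basis_prod :: "('b, 'k::comm_ring_1) hopf_sc \<Rightarrow> 'b list \<Rightarrow> ('b \<Rightarrow> 'k)" where
  "basis_prod H [] = hone H"
| "basis_prod H (i # ks) = hmult H (bvec H i) (basis_prod H ks)"

lemma twisted_prod_id: "twisted_prod H id k xs = basis_prod H xs"
  by (induction xs arbitrary: k) simp_all

context
  fixes A :: "('b, 'k::field) hopf_sc"
  assumes hopf: "is_hopf_algebra A"
begin

lemma finite_basis_hopf: "finite (basis A)"
  using hopf unfolding is_hopf_algebra_def Let_def by simp

lemma mu_eta_left: "j \<in> basis A \<Longrightarrow> l \<in> basis A \<Longrightarrow>
    (\<Sum>i\<in>basis A. eta A i * mu A i j l) = (if j = l then 1 else 0)"
  using hopf unfolding is_hopf_algebra_def Let_def by blast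

lemma mu_eta_right: "j \<in> basis A \<Longrightarrow> l \<in> basis A \<Longrightarrow>
    (\<Sum>i\<in>basis A. eta A i * mu A j i l) = (if j = l then 1 else 0)"
  using hopf unfolding is_hopf_algebra_def Let_def by blast

lemma mu_eps: "i \<in> basis A \<Longrightarrow> j \<in> basis A \<Longrightarrow>
    (\<Sum>l\<in>basis A. mu A i j l * eps A l) = eps A i * eps A j"
  using hopf unfolding is_hopf_algebra_def Let_def by blast

lemma eta_eps: "(\<Sum>i\<in>basis A. eta A i * eps A i) = 1"
  using hopf unfolding is_hopf_algebra_def Let_def by blast

lemma hcounit_hmult: "hcounit A (hmult A a b) = hcounit A a * hcounit A b"
proof -
  have "hcounit A (hmult A a b)
      = (\<Sum>l\<in>basis A. \<Sum>i\<in>basis A. \<Sum>j\<in>basis A. a i * b j * (mu A i j l * eps A l))"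
    by (simp add: hcounit_def hmult_def sum_distrib_left sum_distrib_right mult_ac)
  also have "\<dots> = (\<Sum>i\<in>basis A. \<Sum>j\<in>basis A. \<Sum>l\<in>basis A. a i * b j * (mu A i j l * eps A l))"
    by (subst sum.swap) (rule sum.cong[OF refl], rule sum.swap)
  also have "\<dots> = (\<Sum>i\<in>basis A. \<Sum>j\<in>basis A. a i * b j * (eps A i * eps A j))"
    by (simp add: sum_distrib_left[symmetric] mu_eps)
  also have "\<dots> = hcounit A a * hcounit A b"
    by (simp add: hcounit_def sum_product mult_ac)
  finally show ?thesis .
qed

lemma hcounit_hone: "hcounit A (hone A) = 1"
  using eta_eps by (simp add: hcounit_def hone_def)

lemma hmult_hone_right:
  assumes "hvec A d"
  shows "hmult A d (hone A) = d"
proof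
  fix l
  show "hmult A d (hone A) l = d l"
  proof (cases "l \<in> basis A")
    case True
    have "(\<Sum>i\<in>basis A. \<Sum>j\<in>basis A. d i * hone A j * mu A i j l)
        = (\<Sum>i\<in>basis A. d i * (\<Sum>j\<in>basis A. eta A j * mu A i j l))"
      by (intro sum.cong refl) (simp add: hone_def sum_distrib_left mult_ac)
    also have "\<dots> = (\<Sum>i\<in>basis A. if i = l then d i else 0)"
      using True by (intro sum.cong refl) (simp add: mu_eta_right)
    finally show ?thesis
      using True finite_basis_hopf by (simp add: hmult_def)
  qed (use assms in \<open>simp add: hmult_def hvec_def\<close>)
qed

lemma hmult_hone_left:
  assumes "hvec A d"
  shows "hmult A (hone A) d = d"
proof
  fix l
  show "hmult A (hone A) d l = d l"
  proof (cases "l \<in> basis A")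
    case True
    have "(\<Sum>i\<in>basis A. \<Sum>j\<in>basis A. hone A i * d j * mu A i j l)
        = (\<Sum>j\<in>basis A. d j * (\<Sum>i\<in>basis A. eta A i * mu A i j l))"
      by (subst sum.swap) (intro sum.cong refl, simp add: hone_def sum_distrib_left mult_ac)
    also have "\<dots> = (\<Sum>j\<in>basis A. if j = l then d j else 0)"
      using True by (intro sum.cong refl) (simp add: mu_eta_left)
    finally show ?thesis
      using True finite_basis_hopf by (simp add: hmult_def)
  qed (use assms in \<open>simp add: hmult_def hvec_def\<close>)
qed

end

section \<open>Powers of a periodic linear map\<close>

lemma hlin_funpow_mod:
  assumes per: "\<forall>v. hvec A v \<longrightarrow> (hlin A tau ^^ n) v = v" and v: "hvec A v"
  shows "(hlin A tau ^^ c) v = (hlin A tau ^^ (c mod n)) v"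
proof -
  have "(hlin A tau ^^ (n * q)) v = v" for q
  proof (induction q)
    case (Suc q)
    then show ?case
      using per v by (simp add: funpow_add)
  qed simp
  moreover have "(hlin A tau ^^ c) v = (hlin A tau ^^ (c mod n)) ((hlin A tau ^^ (n * (c div n))) v)"
    by (metis funpow_add o_apply mod_div_mult_eq mult.commute)
  ultimately show ?thesis
    by simp
qed

text \<open>Integer exponents are read modulo the order \<open>n\<close> of \<open>\<tau>\<close>, so that the negative powers
  occurring in the smash coproduct are available.\<close>

definition tau_coef :: "('b, 'k::comm_ring_1) hopf_sc \<Rightarrow> ('b \<Rightarrow> 'b \<Rightarrow> 'k) \<Rightarrow> nat \<Rightarrow> int \<Rightarrow> 'b \<Rightarrow> 'b \<Rightarrow> 'k" where
  "tau_coef A tau n c i j = (hlin A tau ^^ nat (c mod int n)) (bvec A i) j"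

lemma tau_coef_cong: "c mod int n = c' mod int n \<Longrightarrow> tau_coef A tau n c = tau_coef A tau n c'"
  by (simp add: tau_coef_def fun_eq_iff)

lemma tau_coef_zero: "c mod int n = 0 \<Longrightarrow> tau_coef A tau n c i j = (if j = i \<and> j \<in> basis A then 1 else 0)"
  by (simp add: tau_coef_def bvec_def)

lemma tau_coef_of_nat:
  assumes "\<forall>v. hvec A v \<longrightarrow> (hlin A tau ^^ n) v = v"
  shows "tau_coef A tau n (int c) i j = (hlin A tau ^^ c) (bvec A i) j"
  unfolding tau_coef_def using hlin_funpow_mod[OF assms hvec_bvec, of c i]
  by (simp add: nat_mod_as_int[symmetric] zmod_int[symmetric])

lemma tau_coef_minus:
  assumes "y < n"
  shows "tau_coef A tau n (- int y) i j = (hlin A tau ^^ ((n - y) mod n)) (bvec A i) j"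
proof -
  have "nat (- int y mod int n) = (n - y) mod n"
    using assms by (cases "y = 0") (simp_all add: zmod_zminus1_eq_if of_nat_diff)
  then show ?thesis
    by (simp add: tau_coef_def)
qed

fun twisted_coef :: "('b, 'k::comm_ring_1) hopf_sc \<Rightarrow> ('b \<Rightarrow> 'b \<Rightarrow> 'k) \<Rightarrow> nat \<Rightarrow> int \<Rightarrow> 'b list \<Rightarrow> 'b list \<Rightarrow> 'k" where
  "twisted_coef A tau n c [] [] = 1"
| "twisted_coef A tau n c (i # ks) (j # js) = tau_coef A tau n c i j * twisted_coef A tau n (c + 1) ks js"
| "twisted_coef A tau n c _ _ = 0"

lemma twisted_prod_expand:
  assumes fin: "finite (basis A)" and per: "\<forall>v. hvec A v \<longrightarrow> (hlin A tau ^^ n) v = v"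
    and ks: "set ks \<subseteq> basis A"
  shows "twisted_prod A (hlin A tau) c ks l
     = (\<Sum>js\<in>words (basis A) (length ks). twisted_coef A tau n (int c) ks js * basis_prod A js l)"
  using ks
proof (induction ks arbitrary: c l)
  case Nil
  then show ?case by (simp add: words_0)
next
  case (Cons i ks)
  let ?v = "(hlin A tau ^^ c) (bvec A i)"
  have IH: "twisted_prod A (hlin A tau) (Suc c) ks
      = (\<lambda>b. \<Sum>js\<in>words (basis A) (length ks). twisted_coef A tau n (int (Suc c)) ks js * basis_prod A js b)"
    using Cons by auto
  have "twisted_prod A (hlin A tau) c (i # ks) l = hmult A ?v (twisted_prod A (hlin A tau) (Suc c) ks) l"
    by simp
  also have "\<dots> = (\<Sum>j\<in>basis A. ?v j * hmult A (bvec A j) (twisted_prod A (hlin A tau) (Suc c) ks) l)"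
    by (rule hmult_expand_left[OF fin hvec_hlin_funpow[OF hvec_bvec]])
  also have "\<dots> = (\<Sum>j\<in>basis A. ?v j * (\<Sum>js\<in>words (basis A) (length ks).
      twisted_coef A tau n (int (Suc c)) ks js * hmult A (bvec A j) (basis_prod A js) l))"
    unfolding IH hmult_sum_right ..
  also have "\<dots> = (\<Sum>j\<in>basis A. \<Sum>js\<in>words (basis A) (length ks).
      twisted_coef A tau n (int c) (i # ks) (j # js) * basis_prod A (j # js) l)"
    by (simp add: tau_coef_of_nat[OF per] sum_distrib_left mult_ac add.commute)
  also have "\<dots> = (\<Sum>js\<in>words (basis A) (length (i # ks)). twisted_coef A tau n (int c) (i # ks) js * basis_prod A js l)"
    by (simp add: sum_words_Suc[OF fin])
  finally show ?case .
qed

section \<open>Normalized integrals of semisimple Hopf algebras\<close>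

definition is_normalized_integral :: "('b, 'k::field) hopf_sc \<Rightarrow> ('b \<Rightarrow> 'k) \<Rightarrow> bool" where
  "is_normalized_integral H L \<longleftrightarrow> hvec H L \<and>
     (\<forall>a. hvec H a \<longrightarrow> hmult H a L = (\<lambda>b. hcounit H a * L b)) \<and> hcounit H L = 1"

lemma normalized_integral_eqI:
  assumes "is_normalized_integral H L" "\<And>L'. is_normalized_integral H L' \<Longrightarrow> L' = L"
  shows "normalized_integral H = L"
  using assms unfolding normalized_integral_def is_normalized_integral_def by (rule the_equality)

lemma semisimple_split_hone:
  assumes "semisimple H" "left_ideal H I"
  obtains J x y where "left_ideal H J" "I \<inter> J = {\<lambda>_. 0}" "x \<in> I" "y \<in> J" "hone H = (\<lambda>b. x b + y b)"
  using assms hvec_hone unfolding semisimple_def by metis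

lemma left_idealD:
  assumes "left_ideal H I"
  shows "x \<in> I \<Longrightarrow> hvec H x"
    and "x \<in> I \<Longrightarrow> y \<in> I \<Longrightarrow> (\<lambda>b. x b + y b) \<in> I"
    and "x \<in> I \<Longrightarrow> (\<lambda>b. c * x b) \<in> I"
    and "x \<in> I \<Longrightarrow> hvec H a \<Longrightarrow> hmult H a x \<in> I"
  using assms unfolding left_ideal_def by auto

context
  fixes A :: "('b, 'k::field) hopf_sc"
  assumes hopf: "is_hopf_algebra A"
begin

lemma left_ideal_hcounit_kernel: "left_ideal A {v. hvec A v \<and> hcounit A v = 0}"
  unfolding left_ideal_def using hvec_hmult
  by (auto simp: hcounit_add hcounit_smult hcounit_hmult[OF hopf]) (auto simp: hvec_def hcounit_def)

lemma left_ideal_integral_line: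
  assumes d: "hvec A d" and int: "\<And>a. hvec A a \<Longrightarrow> hmult A a d = (\<lambda>b. hcounit A a * d b)"
  shows "left_ideal A (range (\<lambda>c b. c * d b))"
  unfolding left_ideal_def
proof (intro conjI ballI allI impI)
  show "range (\<lambda>c b. c * d b) \<subseteq> {v. hvec A v}" "(\<lambda>_. 0) \<in> range (\<lambda>c b. c * d b)"
    using d by (auto simp: hvec_def intro: range_eqI[where x=0])
next
  fix x y assume "x \<in> range (\<lambda>c b. c * d b)" "y \<in> range (\<lambda>c b. c * d b)"
  then obtain c1 c2 where "x = (\<lambda>b. c1 * d b)" "y = (\<lambda>b. c2 * d b)"
    by blast
  then show "(\<lambda>b. x b + y b) \<in> range (\<lambda>c b. c * d b)"
    by (auto simp: distrib_right intro: range_eqI[where x="c1 + c2"])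
next
  fix c x assume "x \<in> range (\<lambda>c b. c * d b)"
  then obtain c1 where "x = (\<lambda>b. c1 * d b)"
    by blast
  then show "(\<lambda>b. c * x b) \<in> range (\<lambda>c b. c * d b)"
    by (auto simp: mult.assoc intro: range_eqI[where x="c * c1"])
next
  fix a x assume "x \<in> range (\<lambda>c b. c * d b)" "hvec A a"
  then obtain c1 where "x = (\<lambda>b. c1 * d b)"
    by blast
  then show "hmult A a x \<in> range (\<lambda>c b. c * d b)"
    using int[OF \<open>hvec A a\<close>] by (auto simp: hmult_smult_right mult.assoc intro: range_eqI[where x="c1 * hcounit A a"])
qed

text \<open>The complement of the augmentation ideal is spanned by the normalized integral.\<close>

lemma normalized_integral_exists:
  assumes "semisimple A"
  obtains L where "is_normalized_integral A L"
proof -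
  obtain J x y where J: "left_ideal A J" "{v. hvec A v \<and> hcounit A v = 0} \<inter> J = {\<lambda>_. 0}"
    and x: "x \<in> {v. hvec A v \<and> hcounit A v = 0}" and y: "y \<in> J" and one: "hone A = (\<lambda>b. x b + y b)"
    by (rule semisimple_split_hone[OF assms left_ideal_hcounit_kernel])
  have yv: "hvec A y"
    using left_idealD(1)[OF J(1) y] .
  have ey: "hcounit A y = 1"
    using hcounit_hone[OF hopf] x by (simp add: one hcounit_add)
  have "hmult A a y = (\<lambda>b. hcounit A a * y b)" if a: "hvec A a" for a
  proof -
    define z where "z = (\<lambda>b. hmult A a y b + (- hcounit A a) * y b)"
    have "z \<in> J"
      unfolding z_def
      by (rule left_idealD(2)[OF J(1) left_idealD(4)[OF J(1) y a] left_idealD(3)[OF J(1) y]])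
    moreover have "hvec A z"
      using yv by (simp add: z_def hvec_def hmult_def)
    moreover have "hcounit A z = 0"
      unfolding z_def hcounit_add hcounit_smult hcounit_hmult[OF hopf] ey by simp
    ultimately have "z = (\<lambda>_. 0)"
      using J(2) by blast
    then show ?thesis
      by (auto simp: z_def fun_eq_iff dest: fun_cong)
  qed
  then show ?thesis
    using that yv ey unfolding is_normalized_integral_def by blast
qed

text \<open>The difference \<open>d\<close> of two normalized integrals spans a left ideal; writing \<open>1 = c d + y\<close>
  along a complement \<open>J\<close> gives \<open>d = d 1 = c \<epsilon>(d) d + d y = d y \<in> J\<close>, so \<open>d = 0\<close>.\<close>

lemma normalized_integral_unique:
  assumes ss: "semisimple A" and L1: "is_normalized_integral A L1" and L2: "is_normalized_integral A L2"
  shows "L1 = L2"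
proof -
  define d where "d = (\<lambda>b. L1 b + (-1) * L2 b)"
  have dv: "hvec A d"
    using L1 L2 by (simp add: is_normalized_integral_def d_def hvec_def)
  have dint: "hmult A a d = (\<lambda>b. hcounit A a * d b)" if "hvec A a" for a
    using L1 L2 that unfolding is_normalized_integral_def d_def hmult_add_right hmult_smult_right
    by (auto simp: fun_eq_iff algebra_simps)
  have ed: "hcounit A d = 0"
    using L1 L2 unfolding is_normalized_integral_def d_def hcounit_add hcounit_smult by simp
  obtain J x y where J: "left_ideal A J" "range (\<lambda>c b. c * d b) \<inter> J = {\<lambda>_. 0}"
    and x: "x \<in> range (\<lambda>c b. c * d b)" and y: "y \<in> J" and one: "hone A = (\<lambda>b. x b + y b)"
    by (rule semisimple_split_hone[OF ss left_ideal_integral_line[OF dv dint]])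
  obtain c where xc: "x = (\<lambda>b. c * d b)"
    using x by blast
  have "d = hmult A d (hone A)"
    using hmult_hone_right[OF hopf dv] by simp
  also have "\<dots> = hmult A d y"
    unfolding one hmult_add_right xc hmult_smult_right dint[OF dv] ed by simp
  finally have "d \<in> J"
    using left_idealD(4)[OF J(1) y dv] by simp
  moreover have "d \<in> range (\<lambda>c b. c * d b)"
    by (rule range_eqI[where x=1]) simp
  ultimately have "d = (\<lambda>_. 0)"
    using J(2) by blast
  then show ?thesis
    by (auto simp: d_def fun_eq_iff dest: fun_cong)
qed

end

section \<open>The smash coproduct\<close>

lemma basis_smash_coproduct: "basis (smash_coproduct A tau n) = basis A \<times> {0..<n}"
  by (simp add: smash_coproduct_def)

lemma hvec_smash_coproduct_slice:
  "hvec (smash_coproduct A tau n) a \<Longrightarrow> z < n \<Longrightarrow> hvec A (\<lambda>i. a (i, z))"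
  by (simp add: hvec_def basis_smash_coproduct)

lemma mu_smash_coproduct:
  "mu (smash_coproduct A tau n) (i, x) (j, y) (l, z) = (if x = y \<and> y = z then mu A i j l else 0)"
  by (simp add: smash_coproduct_def)

lemma hmult_smash_coproduct:
  assumes "z < n"
  shows "hmult (smash_coproduct A tau n) a v (l, z) = hmult A (\<lambda>i. a (i, z)) (\<lambda>j. v (j, z)) l"
proof -
  have inner: "(\<Sum>y\<in>{0..<n}. a (i, x) * v (j, y) * (if x = y \<and> y = z then mu A i j l else 0))
      = (if x = z then a (i, z) * v (j, z) * mu A i j l else 0)" for i j x
  proof -
    have "(\<Sum>y\<in>{0..<n}. a (i, x) * v (j, y) * (if x = y \<and> y = z then mu A i j l else 0))
        = (\<Sum>y\<in>{0..<n}. if y = z then (if x = z then a (i, z) * v (j, z) * mu A i j l else 0) else 0)"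
      by (intro sum.cong refl) auto
    then show ?thesis
      using assms by simp
  qed
  have "hmult (smash_coproduct A tau n) a v (l, z) = (if l \<in> basis A then (\<Sum>i\<in>basis A. \<Sum>x\<in>{0..<n}.
      \<Sum>j\<in>basis A. \<Sum>y\<in>{0..<n}. a (i, x) * v (j, y) * (if x = y \<and> y = z then mu A i j l else 0)) else 0)"
    using assms by (simp add: hmult_def basis_smash_coproduct sum.cartesian_product' mu_smash_coproduct)
  also have "\<dots> = (if l \<in> basis A then (\<Sum>i\<in>basis A. \<Sum>j\<in>basis A. \<Sum>x\<in>{0..<n}.
      \<Sum>y\<in>{0..<n}. a (i, x) * v (j, y) * (if x = y \<and> y = z then mu A i j l else 0)) else 0)"
    by (rule if_cong[OF refl _ refl], rule sum.cong[OF refl], rule sum.swap)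
  also have "\<dots> = hmult A (\<lambda>i. a (i, z)) (\<lambda>j. v (j, z)) l"
    using assms by (simp add: inner hmult_def)
  finally show ?thesis .
qed

lemma hmult_smash_coproduct_out: "\<not> z < n \<Longrightarrow> hmult (smash_coproduct A tau n) a v (l, z) = 0"
  by (simp add: hmult_def basis_smash_coproduct)

lemma hcounit_smash_coproduct:
  assumes "0 < n"
  shows "hcounit (smash_coproduct A tau n) a = hcounit A (\<lambda>i. a (i, 0))"
proof -
  have "hcounit (smash_coproduct A tau n) a
      = (\<Sum>i\<in>basis A. \<Sum>x\<in>{0..<n}. if x = 0 then a (i, 0) * eps A i else 0)"
    unfolding hcounit_def basis_smash_coproduct sum.cartesian_product'
    by (intro sum.cong refl) (simp add: smash_coproduct_def)
  then show ?thesis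
    using assms by (simp add: hcounit_def)
qed

lemma hmult_zero_left: "hmult H (\<lambda>_. 0) b = (\<lambda>_. 0)"
  by (simp add: hmult_def fun_eq_iff)

lemma basis_prod_smash_coproduct:
  assumes "z < n" and "set ws \<subseteq> basis A \<times> {0..<n}"
  shows "basis_prod (smash_coproduct A tau n) ws (l, z)
     = (if \<forall>w\<in>set ws. snd w = z then basis_prod A (map fst ws) l else 0)"
  using assms(2)
proof (induction ws arbitrary: l)
  case Nil
  then show ?case
    using assms(1) by (simp add: hone_def basis_smash_coproduct smash_coproduct_def)
next
  case (Cons w ws)
  obtain i x where w: "w = (i, x)"
    by fastforce
  have slice: "(\<lambda>j. bvec (smash_coproduct A tau n) w (j, z)) = (if x = z then bvec A i else (\<lambda>_. 0))"
    using assms(1) by (auto simp: w bvec_def basis_smash_coproduct)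
  have IH: "(\<lambda>j. basis_prod (smash_coproduct A tau n) ws (j, z))
      = (if \<forall>w\<in>set ws. snd w = z then basis_prod A (map fst ws) else (\<lambda>_. 0))"
    using Cons by (cases "\<forall>w\<in>set ws. snd w = z") (auto simp: fun_eq_iff)
  show ?case
    unfolding basis_prod.simps hmult_smash_coproduct[OF assms(1)] slice IH
    by (simp add: w hmult_zero_left hmult_zero_right)
qed

text \<open>\<open>smash_embed a x\<close> is \<open>a \<natural> p\<^bsub>\<tau>^x\<^esub>\<close>.\<close>

definition smash_embed :: "('b \<Rightarrow> 'k::zero) \<Rightarrow> nat \<Rightarrow> ('b \<times> nat \<Rightarrow> 'k)" where
  "smash_embed a x = (\<lambda>(i, z). if z = x then a i else 0)"

lemma is_normalized_integral_smash_embed: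
  assumes L: "is_normalized_integral A L" and n: "0 < n"
  shows "is_normalized_integral (smash_coproduct A tau n) (smash_embed L 0)"
  unfolding is_normalized_integral_def
proof (intro conjI allI impI)
  show "hvec (smash_coproduct A tau n) (smash_embed L 0)"
    using L n by (auto simp: is_normalized_integral_def hvec_def basis_smash_coproduct smash_embed_def)
  show "hcounit (smash_coproduct A tau n) (smash_embed L 0) = 1"
    using L by (simp add: hcounit_smash_coproduct[OF n] smash_embed_def is_normalized_integral_def)
next
  fix a assume a: "hvec (smash_coproduct A tau n) a"
  have slice: "(\<lambda>j. smash_embed L 0 (j, z)) = (if z = 0 then L else (\<lambda>_. 0))" for z
    by (auto simp: smash_embed_def)
  show "hmult (smash_coproduct A tau n) a (smash_embed L 0)
      = (\<lambda>b. hcounit (smash_coproduct A tau n) a * smash_embed L 0 b)"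
  proof (intro ext, clarify)
    fix l z
    show "hmult (smash_coproduct A tau n) a (smash_embed L 0) (l, z)
        = hcounit (smash_coproduct A tau n) a * smash_embed L 0 (l, z)"
    proof (cases "z < n")
      case True
      then show ?thesis
        using L hvec_smash_coproduct_slice[OF a n]
        by (auto simp: hmult_smash_coproduct slice hcounit_smash_coproduct[OF n] hmult_zero_right
            is_normalized_integral_def smash_embed_def)
    qed (use n in \<open>simp add: hmult_smash_coproduct_out smash_embed_def\<close>)
  qed
qed

lemma is_normalized_integral_slice_0:
  assumes L: "is_normalized_integral (smash_coproduct A tau n) L" and n: "0 < n"
  shows "is_normalized_integral A (\<lambda>i. L (i, 0))"
  unfolding is_normalized_integral_def
proof (intro conjI allI impI)
  show "hvec A (\<lambda>i. L (i, 0))" "hcounit A (\<lambda>i. L (i, 0)) = 1"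
    using L hvec_smash_coproduct_slice[of A tau n L, OF _ n]
    by (simp_all add: is_normalized_integral_def hcounit_smash_coproduct[OF n])
next
  fix a assume a: "hvec A a"
  have "hvec (smash_coproduct A tau n) (smash_embed a 0)"
    using a n by (auto simp: hvec_def basis_smash_coproduct smash_embed_def)
  then have "hmult (smash_coproduct A tau n) (smash_embed a 0) L (l, 0)
      = hcounit (smash_coproduct A tau n) (smash_embed a 0) * L (l, 0)" for l
    using L by (simp add: is_normalized_integral_def)
  then show "hmult A a (\<lambda>i. L (i, 0)) = (\<lambda>b. hcounit A a * L (b, 0))"
    by (simp add: hmult_smash_coproduct[OF n] hcounit_smash_coproduct[OF n] smash_embed_def fun_eq_iff)
qed

text \<open>Multiplying by \<open>1 \<natural> p\<^sub>z\<close>, which has counit \<open>0\<close> for \<open>z \<noteq> 0\<close>, kills the slice \<open>z\<close>.\<close>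

lemma is_normalized_integral_slice_nonzero:
  assumes hopf: "is_hopf_algebra A" and L: "is_normalized_integral (smash_coproduct A tau n) L"
    and z: "0 < z"
  shows "L (l, z) = 0"
proof (cases "z < n")
  case True
  let ?u = "smash_embed (hone A) z"
  have "hvec (smash_coproduct A tau n) ?u"
    using True by (auto simp: hvec_def basis_smash_coproduct smash_embed_def hone_def)
  then have "hmult (smash_coproduct A tau n) ?u L (l, z) = hcounit (smash_coproduct A tau n) ?u * L (l, z)"
    using L by (simp add: is_normalized_integral_def)
  moreover have "hmult (smash_coproduct A tau n) ?u L (l, z) = L (l, z)"
    using hmult_hone_left[OF hopf hvec_smash_coproduct_slice[of A tau n L, OF _ True]] L
    by (simp add: hmult_smash_coproduct[OF True] smash_embed_def is_normalized_integral_def)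
  moreover have "hcounit (smash_coproduct A tau n) ?u = 0"
    using True z by (subst hcounit_smash_coproduct) (simp_all add: smash_embed_def hcounit_def)
  ultimately show ?thesis
    by simp
next
  case False
  then show ?thesis
    using L by (simp add: is_normalized_integral_def hvec_def basis_smash_coproduct)
qed

lemma normalized_integral_smash_coproduct:
  assumes hopf: "is_hopf_algebra A" and ss: "semisimple A" and n: "0 < n"
  shows "normalized_integral (smash_coproduct A tau n) = smash_embed (normalized_integral A) 0"
proof -
  obtain L where L: "is_normalized_integral A L"
    using normalized_integral_exists[OF hopf ss] .
  have "normalized_integral A = L"
    using L normalized_integral_unique[OF hopf ss] by (intro normalized_integral_eqI) auto
  moreover have "normalized_integral (smash_coproduct A tau n) = smash_embed L 0"
  proof (rule normalized_integral_eqI[OF is_normalized_integral_smash_embed[OF L n]])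
    fix L' assume L': "is_normalized_integral (smash_coproduct A tau n) L'"
    have "(\<lambda>i. L' (i, 0)) = L"
      by (rule normalized_integral_unique[OF hopf ss is_normalized_integral_slice_0[OF L' n] L])
    then show "L' = smash_embed L 0"
      using is_normalized_integral_slice_nonzero[OF hopf L']
      by (auto simp: smash_embed_def fun_eq_iff)
  qed
  ultimately show ?thesis
    by simp
qed

lemma eq_mod_diff_iff:
  fixes y1 y2 z n :: nat
  assumes "y1 < n" "y2 < n" "z < n"
  shows "y2 = (z + n - y1) mod n \<longleftrightarrow> z = (y1 + y2) mod n"
proof (cases "y1 \<le> z")
  case True
  then have "(z + n - y1) mod n = z - y1"
    using assms by (simp add: le_mod_geq)
  then show ?thesis
    using assms True by (cases "y1 + y2 < n") (auto simp: le_mod_geq)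
next
  case False
  then have "(z + n - y1) mod n = z + n - y1"
    using assms by simp
  then show ?thesis
    using assms False by (cases "y1 + y2 < n") (auto simp: le_mod_geq)
qed

lemma delta_smash_coproduct:
  assumes "y1 < n" "y2 < n" "z < n"
  shows "delta (smash_coproduct A tau n) (l, z) (j1, y1) (j2, y2)
    = (if z = (y1 + y2) mod n
       then (\<Sum>p\<in>basis A. delta A l j1 p * tau_coef A tau n (- int y1) p j2) else 0)"
  using eq_mod_diff_iff[OF assms] by (simp add: smash_coproduct_def tau_coef_minus[OF assms(1)])

text \<open>Iterating \<open>\<Delta>(a \<natural> p\<^sub>x) = \<Sum> a\<^sub>1 \<natural> p\<^sub>y \<otimes> y^-1 a\<^sub>2 \<natural> p\<^bsub>y^-1 x\<^esub>\<close> twists the \<open>t\<close>-th tensor factor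
  by \<open>\<tau>^-(y\<^sub>1 + \<dots> + y\<^bsub>t-1\<^esub>)\<close>, where \<open>\<tau>^y\<^sub>s\<close> are the group labels of the earlier
  factors; \<open>smash_coef\<close> is the product of the resulting coefficients.\<close>

fun smash_coef :: "('b, 'k::comm_ring_1) hopf_sc \<Rightarrow> ('b \<Rightarrow> 'b \<Rightarrow> 'k) \<Rightarrow> nat \<Rightarrow> int \<Rightarrow> 'b list \<Rightarrow> ('b \<times> nat) list \<Rightarrow> 'k" where
  "smash_coef A tau n c [] [] = 1"
| "smash_coef A tau n c (i # ks) (w # ws) = tau_coef A tau n c i (fst w) * smash_coef A tau n (c - int (snd w)) ks ws"
| "smash_coef A tau n c _ _ = 0"

lemma smash_coef_cong: "c mod int n = c' mod int n \<Longrightarrow> smash_coef A tau n c ks ws = smash_coef A tau n c' ks ws"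
proof (induction ks arbitrary: ws c c')
  case Nil
  then show ?case by (cases ws) auto
next
  case (Cons i ks)
  show ?case
  proof (cases ws)
    case (Cons w ws')
    have "(c - int (snd w)) mod int n = (c' - int (snd w)) mod int n"
      using Cons.prems by (metis mod_diff_left_eq)
    then show ?thesis
      using Cons Cons.IH[of "c - int (snd w)" "c' - int (snd w)"] by (simp add: tau_coef_cong[OF Cons.prems])
  qed simp
qed

lemma smash_coef_map_last:
  assumes "0 < n"
  shows "smash_coef A tau n c ks (map (\<lambda>j. (j, n - 1)) js) = twisted_coef A tau n c ks js"
proof (induction ks arbitrary: js c)
  case Nil
  then show ?case by (cases js) auto
next
  case (Cons k ks)
  show ?case
  proof (cases js)
    case (Cons j js')
    have "c - int (n - 1) = (c + 1) + (-1) * int n"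
      using assms by simp
    then have "(c - int (n - 1)) mod int n = (c + 1) mod int n"
      by (metis mod_mult_self1)
    then have "smash_coef A tau n (c - int (n - 1)) ks (map (\<lambda>j. (j, n - 1)) js')
        = smash_coef A tau n (c + 1) ks (map (\<lambda>j. (j, n - 1)) js')"
      by (rule smash_coef_cong)
    then show ?thesis
      using Cons Cons.IH[of "c + 1" js'] by simp
  qed simp
qed

lemma sum_smash_coef_Cons:
  assumes fin: "finite (basis A)" and j: "j \<in> basis A"
  shows "(\<Sum>ks\<in>words (basis A) (Suc k). f ks * smash_coef A tau n 0 ks ((j, y) # ws))
       = (\<Sum>ks\<in>words (basis A) k. f (j # ks) * smash_coef A tau n (- int y) ks ws)"
proof -
  have "(\<Sum>ks\<in>words (basis A) (Suc k). f ks * smash_coef A tau n 0 ks ((j, y) # ws))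
      = (\<Sum>i\<in>basis A. if i = j then (\<Sum>ks\<in>words (basis A) k. f (j # ks) * smash_coef A tau n (- int y) ks ws) else 0)"
    unfolding sum_words_Suc[OF fin] by (intro sum.cong refl) (auto simp: tau_coef_zero)
  then show ?thesis
    using fin j by simp
qed

lemma sum_icoef_smash_coef_Cons2:
  assumes fin: "finite (basis A)" and j1: "j1 \<in> basis A"
  shows "(\<Sum>ks\<in>words (basis A) (Suc (Suc k)). icoef A L ks * smash_coef A tau n 0 ks ((j1, y1) # (j2, y2) # xs))
       = (\<Sum>l\<in>basis A. (\<Sum>p\<in>basis A. delta A l j1 p * tau_coef A tau n (- int y1) p j2)
            * (\<Sum>ks\<in>words (basis A) k. icoef A L (l # ks) * smash_coef A tau n (- int y1 - int y2) ks xs))"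
  (is "?lhs = ?rhs")
proof -
  have "?lhs = (\<Sum>p\<in>basis A. \<Sum>ks\<in>words (basis A) k. \<Sum>l\<in>basis A.
      delta A l j1 p * icoef A L (l # ks) * (tau_coef A tau n (- int y1) p j2 * smash_coef A tau n (- int y1 - int y2) ks xs))"
    by (simp add: sum_smash_coef_Cons[OF fin j1] sum_words_Suc[OF fin] sum_distrib_right)
  also have "\<dots> = (\<Sum>l\<in>basis A. \<Sum>p\<in>basis A. \<Sum>ks\<in>words (basis A) k.
      delta A l j1 p * icoef A L (l # ks) * (tau_coef A tau n (- int y1) p j2 * smash_coef A tau n (- int y1 - int y2) ks xs))"
    by (subst sum.swap) (rule sum.cong[OF refl], rule sum.swap)
  also have "\<dots> = (\<Sum>l\<in>basis A. \<Sum>ks\<in>words (basis A) k. \<Sum>p\<in>basis A.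
      delta A l j1 p * icoef A L (l # ks) * (tau_coef A tau n (- int y1) p j2 * smash_coef A tau n (- int y1 - int y2) ks xs))"
    by (rule sum.cong[OF refl], rule sum.swap)
  also have "\<dots> = ?rhs"
    by (simp add: sum_distrib_left sum_distrib_right mult_ac)
  finally show ?thesis .
qed

lemma icoef_smash_coproduct_Cons2:
  assumes "y1 < n" "y2 < n"
  shows "icoef (smash_coproduct A tau n) h ((j1, y1) # (j2, y2) # xs)
       = (\<Sum>l\<in>basis A. (\<Sum>p\<in>basis A. delta A l j1 p * tau_coef A tau n (- int y1) p j2)
            * icoef (smash_coproduct A tau n) h ((l, (y1 + y2) mod n) # xs))"
proof -
  have "icoef (smash_coproduct A tau n) h ((j1, y1) # (j2, y2) # xs)
      = (\<Sum>l\<in>basis A. \<Sum>z\<in>{0..<n}. if z = (y1 + y2) mod n then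
          (\<Sum>p\<in>basis A. delta A l j1 p * tau_coef A tau n (- int y1) p j2)
            * icoef (smash_coproduct A tau n) h ((l, z) # xs) else 0)"
    unfolding icoef.simps basis_smash_coproduct sum.cartesian_product'
    using assms by (intro sum.cong refl) (simp add: delta_smash_coproduct)
  then show ?thesis
    using assms by simp
qed

lemma icoef_smash_embed:
  assumes fin: "finite (basis A)" and x: "x < n"
    and ws: "set (w # ws) \<subseteq> basis (smash_coproduct A tau n)"
  shows "icoef (smash_coproduct A tau n) (smash_embed L x) (w # ws)
    = (if sum_list (map snd (w # ws)) mod n = x
       then (\<Sum>ks\<in>words (basis A) (length (w # ws)). icoef A L ks * smash_coef A tau n 0 ks (w # ws))
       else 0)"
  using ws
proof (induction ws arbitrary: w)
  case Nil
  obtain j y where w: "w = (j, y)" "j \<in> basis A" "y < n"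
    using Nil by (cases w) (auto simp: basis_smash_coproduct)
  then show ?case
    by (simp add: sum_smash_coef_Cons[OF fin] words_0 smash_embed_def)
next
  case (Cons b ws)
  obtain j1 y1 j2 y2 where w: "w = (j1, y1)" "j1 \<in> basis A" "y1 < n"
    and b: "b = (j2, y2)" "j2 \<in> basis A" "y2 < n"
    using Cons.prems by (cases w, cases b) (auto simp: basis_smash_coproduct)
  define S where "S = sum_list (map snd ws)"
  define R where "R l = (\<Sum>ks\<in>words (basis A) (length ws).
      icoef A L (l # ks) * smash_coef A tau n (- int y1 - int y2) ks ws)" for l
  have IH: "icoef (smash_coproduct A tau n) (smash_embed L x) ((l, (y1 + y2) mod n) # ws)
      = (if (y1 + y2 + S) mod n = x then R l else 0)" if l: "l \<in> basis A" for l
  proof -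
    have "- int ((y1 + y2) mod n) mod int n = (- int y1 - int y2) mod int n"
      by (metis mod_minus_eq of_nat_add of_nat_mod minus_add_distrib diff_conv_add_uminus)
    then have "(\<Sum>ks\<in>words (basis A) (length ws). icoef A L (l # ks)
        * smash_coef A tau n (- int ((y1 + y2) mod n)) ks ws) = R l"
      unfolding R_def by (metis smash_coef_cong)
    then show ?thesis
      using Cons.IH[of "(l, (y1 + y2) mod n)"] Cons.prems l w(3)
      by (simp add: basis_smash_coproduct sum_smash_coef_Cons[OF fin l] S_def mod_add_left_eq)
  qed
  have "icoef (smash_coproduct A tau n) (smash_embed L x) (w # b # ws)
      = (\<Sum>l\<in>basis A. (\<Sum>p\<in>basis A. delta A l j1 p * tau_coef A tau n (- int y1) p j2)
          * (if (y1 + y2 + S) mod n = x then R l else 0))"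
    unfolding w b icoef_smash_coproduct_Cons2[OF w(3) b(3)] by (intro sum.cong refl) (simp add: IH)
  also have "\<dots> = (if sum_list (map snd (w # b # ws)) mod n = x then
      (\<Sum>ks\<in>words (basis A) (length (w # b # ws)). icoef A L ks * smash_coef A tau n 0 ks (w # b # ws))
      else 0)"
    by (simp add: w b S_def R_def sum_icoef_smash_coef_Cons2[OF fin w(2)] add.assoc)
  finally show ?case .
qed

lemma character_induced_rep:
  assumes "0 < n"
  shows "character (smash_coproduct A tau n) r (induced_rep n r rho) a
       = character A r rho (\<lambda>i. a (i, n - 1))"
proof -
  have "(\<Sum>x\<in>{0..<n}. a (i, x) * induced_rep n r rho (i, x) $$ (p, p)) = a (i, n - 1) * rho i $$ (p, p)"
    if "p < r" for i p
  proof -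
    have "(\<Sum>x\<in>{0..<n}. a (i, x) * induced_rep n r rho (i, x) $$ (p, p))
        = (\<Sum>x\<in>{0..<n}. if x = n - 1 then a (i, n - 1) * rho i $$ (p, p) else 0)"
      using assms that by (intro sum.cong refl) (auto simp: induced_rep_def)
    then show ?thesis
      using assms by simp
  qed
  then show ?thesis
    by (simp add: character_def hact_def basis_smash_coproduct sum.cartesian_product')
qed

lemma icoef_smash_embed_last_slice:
  assumes fin: "finite (basis A)" and n: "0 < n" and m: "0 < m" "n dvd m"
    and js: "js \<in> words (basis A) m"
  shows "icoef (smash_coproduct A tau n) (smash_embed h 0) (map (\<lambda>j. (j, n - 1)) js)
       = (\<Sum>ks\<in>words (basis A) m. icoef A h ks * twisted_coef A tau n 0 ks js)"
proof -
  obtain j js' where js_Cons: "js = j # js'"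
    using js m(1) by (cases js) auto
  define ws where "ws = map (\<lambda>j. (j, n - 1)) js"
  have ws_Cons: "ws = (j, n - 1) # map (\<lambda>j. (j, n - 1)) js'"
    by (simp add: ws_def js_Cons)
  have "set ws \<subseteq> basis (smash_coproduct A tau n)"
    using js n by (auto simp: ws_def basis_smash_coproduct)
  moreover have "sum_list (map snd ws) mod n = 0"
    using js m(2) by (auto simp: ws_def o_def sum_list_triv elim!: dvdE)
  moreover have "length ws = m"
    using js by (simp add: ws_def)
  ultimately have "icoef (smash_coproduct A tau n) (smash_embed h 0) ws
      = (\<Sum>ks\<in>words (basis A) m. icoef A h ks * smash_coef A tau n 0 ks ws)"
    using icoef_smash_embed[OF fin n, where w="(j, n - 1)" and ws="map (\<lambda>j. (j, n - 1)) js'" and L=h]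
    unfolding ws_Cons[symmetric] by simp
  then show ?thesis
    by (simp only: ws_def smash_coef_map_last[OF n])
qed

lemma hopf_power_smash_embed:
  assumes fin: "finite (basis A)" and per: "\<forall>v. hvec A v \<longrightarrow> (hlin A tau ^^ n) v = v"
    and n: "0 < n" and m: "0 < m" "n dvd m"
  shows "hopf_power (smash_coproduct A tau n) id m (smash_embed h 0) (l, n - 1)
       = hopf_power A (hlin A tau) m h l"
proof -
  let ?K = "smash_coproduct A tau n"
  have "hopf_power ?K id m (smash_embed h 0) (l, n - 1)
      = (\<Sum>ws\<in>words (basis A \<times> {0..<n}) m. if \<forall>w\<in>set ws. snd w = n - 1 then
           icoef ?K (smash_embed h 0) ws * basis_prod A (map fst ws) l else 0)"
    unfolding hopf_power_def twisted_prod_id basis_smash_coproduct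
    using n by (intro sum.cong refl) (simp add: basis_prod_smash_coproduct)
  also have "\<dots> = (\<Sum>js\<in>words (basis A) m.
      icoef ?K (smash_embed h 0) (map (\<lambda>j. (j, n - 1)) js) * basis_prod A js l)"
    using fin n by (subst sum_words_constant_snd) (simp_all add: o_def)
  also have "\<dots> = (\<Sum>js\<in>words (basis A) m.
      (\<Sum>ks\<in>words (basis A) m. icoef A h ks * twisted_coef A tau n 0 ks js) * basis_prod A js l)"
    using icoef_smash_embed_last_slice[OF fin n m] by (intro sum.cong refl) simp
  also have "\<dots> = (\<Sum>ks\<in>words (basis A) m. icoef A h ks *
      (\<Sum>js\<in>words (basis A) m. twisted_coef A tau n 0 ks js * basis_prod A js l))"
    by (simp add: sum_distrib_left sum_distrib_right mult_ac) (rule sum.swap)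
  also have "\<dots> = hopf_power A (hlin A tau) m h l"
    unfolding hopf_power_def by (intro sum.cong refl) (simp add: twisted_prod_expand[OF fin per])
  finally show ?thesis .
qed

theorem theorem4p2:
  fixes A :: "('b, 'k::field_char_0) hopf_sc"
    and tau :: "'b \<Rightarrow> 'b \<Rightarrow> 'k"
    and n m r :: nat
    and rhoN :: "'b \<Rightarrow> 'k mat"
  assumes alg_closed: "\<And>p::'k poly. degree p > 0 \<Longrightarrow> \<exists>x. poly p x = 0"
    and hopf: "is_hopf_algebra A"
    and ss: "semisimple A"
    and aut: "hopf_automorphism A tau"
    and ord: "has_order A tau n"
    and N: "is_module A r rhoN"
    and m: "0 < m" "n dvd m"
  shows "twisted_indicator A tau m r rhoN =
         indicator (smash_coproduct A tau n) m r (induced_rep n r rhoN)"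
proof -
  have n: "0 < n" and per: "\<forall>v. hvec A v \<longrightarrow> (hlin A tau ^^ n) v = v"
    using ord unfolding has_order_def by auto
  have "indicator (smash_coproduct A tau n) m r (induced_rep n r rhoN)
      = character A r rhoN (\<lambda>i. hopf_power (smash_coproduct A tau n) id m
          (smash_embed (normalized_integral A) 0) (i, n - 1))"
    unfolding indicator_def normalized_integral_smash_coproduct[OF hopf ss n] character_induced_rep[OF n] ..
  also have "\<dots> = twisted_indicator A tau m r rhoN"
    unfolding twisted_indicator_def hopf_power_smash_embed[OF finite_basis_hopf[OF hopf] per n m] ..
  finally show ?thesis ..
qed

end
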